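(* Assume $\rho_\alpha^{\mathrm{dir}}<1$, let $\theta^\star$ be the unique projected Bellman fixed point, and let $x_k:=\theta_k-\theta^\star$. Then for each $k\ge0$ there exists an $\mathcal F_k$-measurable stochastic policy $\mu_k$ such that \[ x_{k+1}=A_{\mu_k}x_k+\alpha w_k\quad\text{for all }k\ge0, \] where $w_k:=\widehat g_k(\theta_k)-g(\theta_k)$ satisfies $\mathbb E[w_k\mid\mathcal F_k]=0$.
   Context: Consider a finite discounted MDP with state space $\mathcal S=\{1,\dots,|\mathcal S|\}$, action space $\mathcal A=\{1,\dots,|\mathcal A|\}$, transition probabilities $P(s'\mid s,a)$, real rewards $r(s,a,s')$, expected reward $R(s,a)=\sum_{s'}P(s'\mid s,a)r(s,a,s')$, and discount factor $\gamma\in(0,1)$. State-action vectors are ordered as $(1,1),(2,1),\dots,(|\mathcal S|,1),(1,2),\dots$. The matrix $P\in\mathbb R^{|\mathcal S||\mathcal A|\times|\mathcal S|}$ has rows $P(\cdot\mid s,a)$, and $R$ has entries $R(s,a)$. A stochastic policy is a map $\mu:\mathcal S\to\Delta_{|\mathcal A|}$. The matrix $\Pi^\mu\in\mathbb R^{|\mathcal S|\times|\mathcal S||\mathcal A|}$ has entry $\mu(a\mid s)$ at row $s$, column $(s,a)$, and zeros elsewhere. The set $\Theta$ is the set of deterministic stationary policies, viewed as stochastic policies. The feature matrix $\Phi\in\mathbb R^{|\mathcal S||\mathcal A|\times m}$ has full column rank and rows $\phi(s,a)^\top$. Define $V_\theta(s):=\max_a\phi(s,a)^\top\theta$. The distribution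 $d$ on $\mathcal S\times\mathcal A$ satisfies $d>0$ everywhere, and $D=\mathrm{diag}(d)$. The step size is $\alpha\in(0,1)$. Define $g(\theta):=\Phi^\top D(R+\gamma PV_\theta-\Phi\theta)$. A projected Bellman fixed point is a $\theta^\star$ with $g(\theta^\star)=0$. Define $A_\mu:=I-\alpha\Phi^\top D\Phi+\alpha\gamma\Phi^\top DP\Pi^\mu\Phi$. Let $\rho_\alpha^{\mathrm{dir}}:=\lim_k\max_{\pi_i\in\Theta}\|A_{\pi_k}\cdots A_{\pi_1}\|^{1/k}$ be the joint spectral radius of $\{A_\pi:\pi\in\Theta\}$. When $\rho_\alpha^{\mathrm{dir}}<1$ a unique projected Bellman fixed point exists. i.i.d. sampling: $\theta_0$ is deterministic. At each time $k$, $(s_k,a_k)$ is drawn independently according to $d$, then $s'_k\sim P(\cdot\mid s_k,a_k)$, and $r_{k+1}:=r(s_k,a_k,s'_k)$. The filtration is $\mathcal F_0=\sigma(\theta_0)$ and $\mathcal F_k=\sigma(\theta_0,\{(s_t,a_t,s'_t,r_{t+1}):t\le k-1\})$. Define \[ \widehat g_k(\theta):=\phi(s_k,a_k)\Big(r_{k+1}+\gamma\max_u\phi(s'_k,u)^\top\theta-\phi(s_k,a_k)^\top\theta\Big), \] and the update $\theta_{k+1}=\theta_k+\alpha\widehat g_k(\theta_k)$. *)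

theory Defs
  imports "HOL-Analysis.Analysis" "HOL-Probability.Probability"
begin

text \<open>P s a s' = P(s' | s,a); r s a s' reward; d s a the sampling distribution;
  phi s a the feature vector; a stochastic policy is mu :: 's => 'a => real
  with mu s a = mu(a | s).\<close>

definition Rexp :: "('s::finite \<Rightarrow> 'a \<Rightarrow> 's \<Rightarrow> real) \<Rightarrow> ('s \<Rightarrow> 'a \<Rightarrow> 's \<Rightarrow> real) \<Rightarrow> 's \<Rightarrow> 'a \<Rightarrow> real" where
  "Rexp P r s a = (\<Sum>s'\<in>UNIV. P s a s' * r s a s')"

definition Vtheta :: "('s \<Rightarrow> 'a::finite \<Rightarrow> real^'m) \<Rightarrow> real^'m \<Rightarrow> 's \<Rightarrow> real" where
  "Vtheta phi \<theta> s = Max ((\<lambda>a. phi s a \<bullet> \<theta>) ` UNIV)"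

text \<open>g(theta) = Phi^T D (R + gamma P V_theta - Phi theta).\<close>
definition gbar :: "('s::finite \<Rightarrow> 'a::finite \<Rightarrow> 's \<Rightarrow> real) \<Rightarrow> ('s \<Rightarrow> 'a \<Rightarrow> 's \<Rightarrow> real) \<Rightarrow> real
    \<Rightarrow> ('s \<Rightarrow> 'a \<Rightarrow> real) \<Rightarrow> ('s \<Rightarrow> 'a \<Rightarrow> real^'m) \<Rightarrow> real^'m \<Rightarrow> real^'m" where
  "gbar P r \<gamma> d phi \<theta> =
     (\<Sum>s\<in>UNIV. \<Sum>a\<in>UNIV. (d s a * (Rexp P r s a + \<gamma> * (\<Sum>s'\<in>UNIV. P s a s' * Vtheta phi \<theta> s')
        - phi s a \<bullet> \<theta>)) *\<^sub>R phi s a)"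

text \<open>A_mu = I - alpha Phi^T D Phi + alpha gamma Phi^T D P Pi^mu Phi, as a linear map.\<close>
definition Amat :: "('s::finite \<Rightarrow> 'a::finite \<Rightarrow> 's \<Rightarrow> real) \<Rightarrow> real \<Rightarrow> real
    \<Rightarrow> ('s \<Rightarrow> 'a \<Rightarrow> real) \<Rightarrow> ('s \<Rightarrow> 'a \<Rightarrow> real^'m) \<Rightarrow> ('s \<Rightarrow> 'a \<Rightarrow> real) \<Rightarrow> real^'m \<Rightarrow> real^'m" where
  "Amat P \<gamma> \<alpha> d phi mu x =
     x - \<alpha> *\<^sub>R (\<Sum>s\<in>UNIV. \<Sum>a\<in>UNIV. (d s a * (phi s a \<bullet> x)) *\<^sub>R phi s a)
       + (\<alpha> * \<gamma>) *\<^sub>R (\<Sum>s\<in>UNIV. \<Sum>a\<in>UNIV.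
            (d s a * (\<Sum>s'\<in>UNIV. P s a s' * (\<Sum>u\<in>UNIV. mu s' u * (phi s' u \<bullet> x)))) *\<^sub>R phi s a)"

definition det_policy :: "('s \<Rightarrow> 'a) \<Rightarrow> 's \<Rightarrow> 'a \<Rightarrow> real" where
  "det_policy \<pi> s a = (if a = \<pi> s then 1 else 0)"

definition stoch_policy :: "('s::finite \<Rightarrow> 'a::finite \<Rightarrow> real) \<Rightarrow> bool" where
  "stoch_policy mu \<longleftrightarrow> (\<forall>s a. 0 \<le> mu s a) \<and> (\<forall>s. (\<Sum>a\<in>UNIV. mu s a) = 1)"

text \<open>Product A_{pi_k} ... A_{pi_1} for the list [pi_1, ..., pi_k] (pi_1 applied first).\<close>
definition Aprod :: "('s::finite \<Rightarrow> 'a::finite \<Rightarrow> 's \<Rightarrow> real) \<Rightarrow> real \<Rightarrow> real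
    \<Rightarrow> ('s \<Rightarrow> 'a \<Rightarrow> real) \<Rightarrow> ('s \<Rightarrow> 'a \<Rightarrow> real^'m) \<Rightarrow> ('s \<Rightarrow> 'a) list \<Rightarrow> real^'m \<Rightarrow> real^'m" where
  "Aprod P \<gamma> \<alpha> d phi ps = foldr (\<lambda>\<pi> f. f \<circ> Amat P \<gamma> \<alpha> d phi (det_policy \<pi>)) ps id"

definition jsr_dir :: "('s::finite \<Rightarrow> 'a::finite \<Rightarrow> 's \<Rightarrow> real) \<Rightarrow> real \<Rightarrow> real
    \<Rightarrow> ('s \<Rightarrow> 'a \<Rightarrow> real) \<Rightarrow> ('s \<Rightarrow> 'a \<Rightarrow> real^'m) \<Rightarrow> real" where
  "jsr_dir P \<gamma> \<alpha> d phi =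
     lim (\<lambda>k. root (Suc k) (Max ((\<lambda>ps. onorm (Aprod P \<gamma> \<alpha> d phi ps)) ` {ps. length ps = Suc k})))"

definition ghat :: "('s \<Rightarrow> 'a \<Rightarrow> 's \<Rightarrow> real) \<Rightarrow> real \<Rightarrow> ('s \<Rightarrow> 'a::finite \<Rightarrow> real^'m)
    \<Rightarrow> 's \<times> 'a \<times> 's \<Rightarrow> real^'m \<Rightarrow> real^'m" where
  "ghat r \<gamma> phi smp \<theta> = (case smp of (s, a, s') \<Rightarrow>
     (r s a s' + \<gamma> * Vtheta phi \<theta> s' - phi s a \<bullet> \<theta>) *\<^sub>R phi s a)"

primrec theta_iter :: "('s \<Rightarrow> 'a \<Rightarrow> 's \<Rightarrow> real) \<Rightarrow> real \<Rightarrow> real \<Rightarrow> ('s \<Rightarrow> 'a::finite \<Rightarrow> real^'m)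
    \<Rightarrow> real^'m \<Rightarrow> (nat \<Rightarrow> 'w \<Rightarrow> 's \<times> 'a \<times> 's) \<Rightarrow> nat \<Rightarrow> 'w \<Rightarrow> real^'m" where
  "theta_iter r \<gamma> \<alpha> phi \<theta>0 X 0 \<omega> = \<theta>0"
| "theta_iter r \<gamma> \<alpha> phi \<theta>0 X (Suc k) \<omega> =
     theta_iter r \<gamma> \<alpha> phi \<theta>0 X k \<omega> + \<alpha> *\<^sub>R ghat r \<gamma> phi (X k \<omega>) (theta_iter r \<gamma> \<alpha> phi \<theta>0 X k \<omega>)"

text \<open>Filtration F_k = sigma(theta_0, samples up to time k-1); theta_0 is deterministic.\<close>
definition filt :: "'w measure \<Rightarrow> (nat \<Rightarrow> 'w \<Rightarrow> 'b) \<Rightarrow> nat \<Rightarrow> 'w measure" where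
  "filt M X k = sigma (space M) (\<Union>t\<in>{..<k}. {X t -` A \<inter> space M | A. True})"

end

theory Submission
  imports Defs
begin

(* V_theta(s) is a maximum of functions linear in theta, so V_theta(s) - V_theta_star(s) lies
   between the increments phi(s,u)^T (theta - theta_star) along the greedy actions u of theta and
   of theta_star.  Hence it is the average of these increments under a two-point stochastic
   policy mu, and for this mu, A_mu (theta - theta_star) = (theta - theta_star) +
   alpha (g(theta) - g(theta_star)); with g(theta_star) = 0 this is the error recursion.
   The noise has conditional mean zero because the k-th sample is independent of the first k
   samples, which determine theta_k, and under the sampling law d(s,a) P(s'|s,a) the
   semi-gradient ghat(theta) averages to g(theta) for every fixed theta. *)

lemma Vtheta_attained: "\<exists>a. phi s a \<bullet> \<theta> = Vtheta phi \<theta> s"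
proof -
  have "Vtheta phi \<theta> s \<in> (\<lambda>a. phi s a \<bullet> \<theta>) ` UNIV"
    unfolding Vtheta_def by (rule Max_in) auto
  then show ?thesis by auto
qed

lemma inner_le_Vtheta: "phi s a \<bullet> \<theta> \<le> Vtheta phi \<theta> s"
  unfolding Vtheta_def by (rule Max_ge) auto

lemma Vtheta_diff_between:
  "\<exists>u v. phi s v \<bullet> (\<theta> - \<theta>') \<le> Vtheta phi \<theta> s - Vtheta phi \<theta>' s
       \<and> Vtheta phi \<theta> s - Vtheta phi \<theta>' s \<le> phi s u \<bullet> (\<theta> - \<theta>')"
proof -
  obtain u where u: "phi s u \<bullet> \<theta> = Vtheta phi \<theta> s" using Vtheta_attained[of phi s \<theta>] by blast
  obtain v where v: "phi s v \<bullet> \<theta>' = Vtheta phi \<theta>' s" using Vtheta_attained[of phi s \<theta>'] by blast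
  have "phi s v \<bullet> (\<theta> - \<theta>') \<le> Vtheta phi \<theta> s - Vtheta phi \<theta>' s"
    using v inner_le_Vtheta[of phi s v \<theta>] by (simp add: inner_diff_right)
  moreover have "Vtheta phi \<theta> s - Vtheta phi \<theta>' s \<le> phi s u \<bullet> (\<theta> - \<theta>')"
    using u inner_le_Vtheta[of phi s u \<theta>'] by (simp add: inner_diff_right)
  ultimately show ?thesis by blast
qed

lemma stoch_policy_average_eq:
  fixes f :: "'s::finite \<Rightarrow> 'a::finite \<Rightarrow> real"
  assumes between: "\<And>s. \<exists>u v. f s v \<le> c s \<and> c s \<le> f s u"
  shows "\<exists>mu. stoch_policy mu \<and> (\<forall>s. (\<Sum>a\<in>UNIV. mu s a * f s a) = c s)"
proof -
  have "\<exists>u v t. 0 \<le> t \<and> t \<le> 1 \<and> c s = (1 - t) * f s v + t * f s u" for s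
  proof -
    obtain u v where "c s \<in> closed_segment (f s v) (f s u)"
      using between[of s] by (force simp: closed_segment_eq_real_ivl)
    then show ?thesis by (auto simp: in_segment)
  qed
  then obtain u v t where ut: "\<And>s. 0 \<le> t s \<and> t s \<le> 1 \<and> c s = (1 - t s) * f s (v s) + t s * f s (u s)"
    by metis
  define mu where "mu s a = t s * of_bool (a = u s) + (1 - t s) * of_bool (a = v s)" for s a
  have average: "(\<Sum>a\<in>UNIV. mu s a * g a) = t s * g (u s) + (1 - t s) * g (v s)" for s g
  proof -
    have "(\<Sum>a\<in>UNIV. mu s a * g a)
        = (\<Sum>a\<in>UNIV. t s * (if a = u s then g a else 0) + (1 - t s) * (if a = v s then g a else 0))"
      by (intro sum.cong) (auto simp: mu_def algebra_simps)
    then show ?thesis by (simp add: sum.distrib sum_distrib_left[symmetric])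
  qed
  have "stoch_policy mu"
    unfolding stoch_policy_def using ut average[where g = "\<lambda>_. 1"] by (auto simp: mu_def)
  moreover have "(\<Sum>a\<in>UNIV. mu s a * f s a) = c s" for s
    using ut[of s] unfolding average by (simp add: algebra_simps)
  ultimately show ?thesis by blast
qed

text \<open>Any choice will do: \<open>\<mu>\<^sub>k\<close> is \<open>F\<^sub>k\<close>-measurable as soon as it depends on \<open>\<theta>\<^sub>k\<close>
  alone, and \<open>\<theta>\<^sub>k\<close> is a function of the first \<open>k\<close> samples.\<close>
definition linearizing_policy ::
  "('s::finite \<Rightarrow> 'a::finite \<Rightarrow> real^'m) \<Rightarrow> real^'m \<Rightarrow> real^'m \<Rightarrow> 's \<Rightarrow> 'a \<Rightarrow> real" where
  "linearizing_policy phi \<theta>' \<theta> = (SOME mu. stoch_policy mu \<and>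
     (\<forall>s. (\<Sum>a\<in>UNIV. mu s a * (phi s a \<bullet> (\<theta> - \<theta>'))) = Vtheta phi \<theta> s - Vtheta phi \<theta>' s))"

lemma linearizing_policy:
  "stoch_policy (linearizing_policy phi \<theta>' \<theta>)"
  "(\<Sum>a\<in>UNIV. linearizing_policy phi \<theta>' \<theta> s a * (phi s a \<bullet> (\<theta> - \<theta>')))
     = Vtheta phi \<theta> s - Vtheta phi \<theta>' s"
proof -
  have "\<exists>mu. stoch_policy mu \<and>
      (\<forall>s. (\<Sum>a\<in>UNIV. mu s a * (phi s a \<bullet> (\<theta> - \<theta>'))) = Vtheta phi \<theta> s - Vtheta phi \<theta>' s)"
    by (rule stoch_policy_average_eq) (rule Vtheta_diff_between)
  from someI_ex[OF this] show "stoch_policy (linearizing_policy phi \<theta>' \<theta>)"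
    "(\<Sum>a\<in>UNIV. linearizing_policy phi \<theta>' \<theta> s a * (phi s a \<bullet> (\<theta> - \<theta>')))
       = Vtheta phi \<theta> s - Vtheta phi \<theta>' s"
    unfolding linearizing_policy_def by blast+
qed

lemma gbar_diff:
  "gbar P r \<gamma> d phi \<theta> - gbar P r \<gamma> d phi \<theta>' =
   \<gamma> *\<^sub>R (\<Sum>s\<in>UNIV. \<Sum>a\<in>UNIV.
      (d s a * (\<Sum>s'\<in>UNIV. P s a s' * (Vtheta phi \<theta> s' - Vtheta phi \<theta>' s'))) *\<^sub>R phi s a)
   - (\<Sum>s\<in>UNIV. \<Sum>a\<in>UNIV. (d s a * (phi s a \<bullet> (\<theta> - \<theta>'))) *\<^sub>R phi s a)"
  unfolding gbar_def scaleR_sum_right sum_subtractf[symmetric]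
  by (intro sum.cong refl)
    (simp add: algebra_simps sum_subtractf inner_diff_right sum_distrib_left)

lemma Amat_eq_gbar_diff:
  assumes "\<And>s. (\<Sum>a\<in>UNIV. mu s a * (phi s a \<bullet> (\<theta> - \<theta>'))) = Vtheta phi \<theta> s - Vtheta phi \<theta>' s"
  shows "Amat P \<gamma> \<alpha> d phi mu (\<theta> - \<theta>')
    = (\<theta> - \<theta>') + \<alpha> *\<^sub>R (gbar P r \<gamma> d phi \<theta> - gbar P r \<gamma> d phi \<theta>')"
  unfolding Amat_def gbar_diff assms by (simp add: algebra_simps)

lemma ghat_step_error_eq:
  assumes "gbar P r \<gamma> d phi \<theta>s = 0"
  shows "\<theta> + \<alpha> *\<^sub>R ghat r \<gamma> phi x \<theta> - \<theta>s
    = Amat P \<gamma> \<alpha> d phi (linearizing_policy phi \<theta>s \<theta>) (\<theta> - \<theta>s)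
      + \<alpha> *\<^sub>R (ghat r \<gamma> phi x \<theta> - gbar P r \<gamma> d phi \<theta>)"
proof -
  have "Amat P \<gamma> \<alpha> d phi (linearizing_policy phi \<theta>s \<theta>) (\<theta> - \<theta>s)
      = (\<theta> - \<theta>s) + \<alpha> *\<^sub>R (gbar P r \<gamma> d phi \<theta> - gbar P r \<gamma> d phi \<theta>s)"
    by (rule Amat_eq_gbar_diff[OF linearizing_policy(2)])
  then show ?thesis by (simp add: assms algebra_simps)
qed

definition sample_prob :: "('s \<Rightarrow> 'a \<Rightarrow> 's \<Rightarrow> real) \<Rightarrow> ('s \<Rightarrow> 'a \<Rightarrow> real) \<Rightarrow> 's \<times> 'a \<times> 's \<Rightarrow> real" where
  "sample_prob P d x = (case x of (s, a, s') \<Rightarrow> d s a * P s a s')"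

lemma sum_UNIV_triple:
  "(\<Sum>x\<in>UNIV. g x) = (\<Sum>s\<in>UNIV. \<Sum>a\<in>UNIV. \<Sum>s'\<in>UNIV. g (s, a, s'))"
  for g :: "'s::finite \<times> 'a::finite \<times> 's \<Rightarrow> 'b::comm_monoid_add"
  by (simp add: sum.cartesian_product UNIV_Times_UNIV[symmetric] del: UNIV_Times_UNIV)

lemma sum_sample_prob:
  fixes P :: "'s::finite \<Rightarrow> 'a::finite \<Rightarrow> 's \<Rightarrow> real"
  assumes "\<And>s a. (\<Sum>s'\<in>UNIV. P s a s') = 1" and "(\<Sum>s\<in>UNIV. \<Sum>a\<in>UNIV. d s a) = 1"
  shows "(\<Sum>x\<in>UNIV. sample_prob P d x) = 1"
  unfolding sum_UNIV_triple sample_prob_def by (simp add: sum_distrib_left[symmetric] assms)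

lemma ghat_mean:
  fixes P :: "'s::finite \<Rightarrow> 'a::finite \<Rightarrow> 's \<Rightarrow> real"
  assumes P_sum: "\<And>s a. (\<Sum>s'\<in>UNIV. P s a s') = 1"
  shows "(\<Sum>x\<in>UNIV. sample_prob P d x *\<^sub>R ghat r \<gamma> phi x \<theta>) = gbar P r \<gamma> d phi \<theta>"
proof -
  have "(\<Sum>s'\<in>UNIV. sample_prob P d (s, a, s') *\<^sub>R ghat r \<gamma> phi (s, a, s') \<theta>)
      = (d s a * (Rexp P r s a + \<gamma> * (\<Sum>s'\<in>UNIV. P s a s' * Vtheta phi \<theta> s') - phi s a \<bullet> \<theta>))
          *\<^sub>R phi s a" for s a
  proof -
    have "(\<Sum>s'\<in>UNIV. sample_prob P d (s, a, s') *\<^sub>R ghat r \<gamma> phi (s, a, s') \<theta>)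
        = (\<Sum>s'\<in>UNIV. d s a * (P s a s' * r s a s') + d s a * \<gamma> * (P s a s' * Vtheta phi \<theta> s')
             - d s a * (phi s a \<bullet> \<theta>) * P s a s') *\<^sub>R phi s a"
      unfolding ghat_def sample_prob_def scaleR_sum_left
      by (intro sum.cong refl) (simp add: algebra_simps)
    also have "\<dots> = (d s a * (Rexp P r s a + \<gamma> * (\<Sum>s'\<in>UNIV. P s a s' * Vtheta phi \<theta> s')
                       - phi s a \<bullet> \<theta>)) *\<^sub>R phi s a"
      using P_sum[of s a]
      by (simp add: sum_subtractf sum.distrib sum_distrib_left[symmetric]
          sum_distrib_right[symmetric] Rexp_def algebra_simps)
    finally show ?thesis .
  qed
  then show ?thesis
    unfolding sum_UNIV_triple gbar_def by simp
qed

lemma ghat_centered: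
  fixes P :: "'s::finite \<Rightarrow> 'a::finite \<Rightarrow> 's \<Rightarrow> real"
  assumes "\<And>s a. (\<Sum>s'\<in>UNIV. P s a s') = 1" and "(\<Sum>s\<in>UNIV. \<Sum>a\<in>UNIV. d s a) = 1"
  shows "(\<Sum>x\<in>UNIV. sample_prob P d x *\<^sub>R (ghat r \<gamma> phi x \<theta> - gbar P r \<gamma> d phi \<theta>)) = 0"
  by (simp add: scaleR_diff_right sum_subtractf ghat_mean[OF assms(1)]
      scaleR_sum_left[symmetric] sum_sample_prob[OF assms])

definition history :: "(nat \<Rightarrow> 'w \<Rightarrow> 'x) \<Rightarrow> nat \<Rightarrow> 'w \<Rightarrow> 'x list" where
  "history X k \<omega> = map (\<lambda>t. X t \<omega>) [0..<k]"

lemma history_0 [simp]: "history X 0 \<omega> = []"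
  by (simp add: history_def)

lemma history_Suc: "history X (Suc k) \<omega> = history X k \<omega> @ [X k \<omega>]"
  by (simp add: history_def)

lemma length_history [simp]: "length (history X k \<omega>) = k"
  by (simp add: history_def)

lemma finite_lists_length: "finite {l :: 'x::finite list. length l = k}"
  using finite_lists_length_eq[of "UNIV :: 'x set" k] by simp

lemma space_filt [simp]: "space (filt M X k) = space M"
  unfolding filt_def by (rule space_measure_of) auto

lemma sets_filt:
  "sets (filt M X k) = sigma_sets (space M) (\<Union>t\<in>{..<k}. {X t -` A \<inter> space M | A. True})"
  unfolding filt_def by (rule sets_measure_of) auto

lemma vimage_in_filt: "t < k \<Longrightarrow> X t -` A \<inter> space M \<in> sets (filt M X k)"
  unfolding sets_filt by (rule sigma_sets.Basic) blast

lemma subalgebra_filt: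
  assumes "\<And>t. X t \<in> measurable M (count_space UNIV)"
  shows "subalgebra M (filt M X k)"
proof -
  have "sets (filt M X k) \<subseteq> sets M"
    unfolding sets_filt by (rule sets.sigma_sets_subset) (use measurable_sets[OF assms] in auto)
  then show ?thesis by (simp add: subalgebra_def)
qed

lemma history_vimage_in_filt: "k \<le> n \<Longrightarrow> history X k -` {l} \<inter> space M \<in> sets (filt M X n)"
proof (induction k arbitrary: l)
  case 0
  then show ?case
    using sets.top[of "filt M X n"] by (cases "l = []") (auto simp: history_def)
next
  case (Suc k)
  have "history X (Suc k) -` {l} \<inter> space M = (if l = [] then {} else
      (history X k -` {butlast l} \<inter> space M) \<inter> (X k -` {last l} \<inter> space M))"
    by (auto simp: history_Suc snoc_eq_iff_butlast)
  then show ?case using Suc vimage_in_filt[of k n X "{last l}" M] by auto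
qed

lemma history_measurable:
  fixes X :: "nat \<Rightarrow> 'w \<Rightarrow> 'x::countable"
  shows "history X k \<in> measurable (filt M X k) (count_space UNIV)"
  by (subst measurable_count_space_eq2_countable) (auto intro: history_vimage_in_filt)

lemma (in finite_measure) integrable_finite_range:
  assumes "Y \<in> measurable M (count_space UNIV)" and "finite S" and "\<And>\<omega>. Y \<omega> \<in> S"
  shows "integrable M (\<lambda>\<omega>. h (Y \<omega>) :: real)"
proof (rule integrable_const_bound[where B = "\<Sum>y\<in>S. \<bar>h y\<bar>"])
  show "AE \<omega> in M. norm (h (Y \<omega>)) \<le> (\<Sum>y\<in>S. \<bar>h y\<bar>)"
    using assms(2,3) by (auto intro!: member_le_sum)
qed (rule measurable_compose[OF assms(1)], simp)

context prob_space
begin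

lemma indep_filt_sample:
  assumes X_meas: "\<And>t. X t \<in> measurable M (count_space UNIV)"
    and X_indep: "indep_vars (\<lambda>_. count_space UNIV) X UNIV"
    and A: "A \<in> sets (filt M X k)"
  shows "prob (A \<inter> (X k -` B \<inter> space M)) = prob A * prob (X k -` B \<inter> space M)"
proof -
  define E where "E t = {X t -` A \<inter> space M | A. True}" for t
  define F where "F j = sigma_sets (space M) (\<Union>t\<in>(if j then {..<k} else {k}). E t)" for j
  have "Int_stable (E t)" for t
  proof (unfold Int_stable_def E_def, safe)
    fix A B
    show "\<exists>C. X t -` A \<inter> space M \<inter> (X t -` B \<inter> space M) = X t -` C \<inter> space M \<and> True"
      by (rule exI[of _ "A \<inter> B"]) auto
  qed
  moreover have "indep_sets E UNIV"
    using X_indep unfolding indep_vars_def2 E_def by simp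
  ultimately have "indep_sets F UNIV"
    unfolding F_def
    by (intro indep_sets_collect_sigma)
      (auto intro: indep_sets_mono_index simp: disjoint_family_on_def)
  moreover have "A \<in> F True"
    using A by (simp add: F_def E_def sets_filt)
  moreover have "X k -` B \<inter> space M \<in> F False"
    by (auto simp: F_def E_def intro!: sigma_sets.Basic)
  ultimately show ?thesis
    by (auto simp: UNIV_bool Int_commute mult.commute
        dest!: indep_setsD[where J = UNIV and A = "\<lambda>j. if j then A else X k -` B \<inter> space M"])
qed

lemma set_integral_indep_sample:
  fixes X :: "nat \<Rightarrow> 'a \<Rightarrow> 'x::finite" and h :: "'x \<Rightarrow> real"
  assumes X_meas: "\<And>t. X t \<in> measurable M (count_space UNIV)"
    and X_indep: "indep_vars (\<lambda>_. count_space UNIV) X UNIV"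
    and A: "A \<in> sets (filt M X k)"
  shows "(\<integral>\<omega>\<in>A. h (X k \<omega>) \<partial>M) = prob A * (\<Sum>x\<in>UNIV. prob {\<omega> \<in> space M. X k \<omega> = x} * h x)"
proof -
  define S where "S x = A \<inter> (X k -` {x} \<inter> space M)" for x
  have S_events: "S x \<in> events" for x
    using A subalgebra_filt[of X M k, OF X_meas] measurable_sets[OF X_meas]
    by (auto simp: S_def subalgebra_def)
  have "indicator A \<omega> * h (X k \<omega>) = (\<Sum>x\<in>UNIV. h x * indicator (S x) \<omega>)" if "\<omega> \<in> space M" for \<omega>
    using that by (simp add: S_def indicator_def if_distrib[of "\<lambda>b. h _ * b"] cong: if_cong)
  then have "(\<integral>\<omega>\<in>A. h (X k \<omega>) \<partial>M) = (\<integral>\<omega>. (\<Sum>x\<in>UNIV. h x * indicator (S x) \<omega>) \<partial>M)"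
    unfolding set_lebesgue_integral_def by (intro Bochner_Integration.integral_cong) simp_all
  also have "\<dots> = (\<Sum>x\<in>UNIV. h x * prob (S x))"
    using S_events
    by (subst Bochner_Integration.integral_sum)
      (auto simp: Int_absorb2 sets.sets_into_space less_top[symmetric] simp del: sum_mult_indicator)
  also have "\<dots> = (\<Sum>x\<in>UNIV. h x * (prob A * prob {\<omega> \<in> space M. X k \<omega> = x}))"
    unfolding S_def indep_filt_sample[OF X_meas X_indep A] by (simp add: vimage_def Int_def conj_commute)
  finally show ?thesis by (simp add: sum_distrib_left algebra_simps)
qed

lemma set_integral_history_centered:
  fixes X :: "nat \<Rightarrow> 'a \<Rightarrow> 'x::finite" and H :: "'x list \<Rightarrow> 'x \<Rightarrow> real"
  assumes X_meas: "\<And>t. X t \<in> measurable M (count_space UNIV)"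
    and X_indep: "indep_vars (\<lambda>_. count_space UNIV) X UNIV"
    and centered: "\<And>l. (\<Sum>x\<in>UNIV. prob {\<omega> \<in> space M. X k \<omega> = x} * H l x) = 0"
    and A: "A \<in> sets (filt M X k)"
  shows "(\<integral>\<omega>\<in>A. H (history X k \<omega>) (X k \<omega>) \<partial>M) = 0"
proof -
  define L where "L = {l :: 'x list. length l = k}"
  define E where "E l = A \<inter> (history X k -` {l} \<inter> space M)" for l
  have E_filt: "E l \<in> sets (filt M X k)" for l
    using A history_vimage_in_filt[of k k X l M] by (auto simp: E_def)
  then have E_events: "E l \<in> events" for l
    using subalgebra_filt[of X M k, OF X_meas] by (auto simp: subalgebra_def)
  have "indicator A \<omega> * H (history X k \<omega>) (X k \<omega>) = (\<Sum>l\<in>L. H l (X k \<omega>) * indicator (E l) \<omega>)"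
    if "\<omega> \<in> space M" for \<omega>
  proof -
    have "H l (X k \<omega>) * indicator (E l) \<omega>
        = (if l = history X k \<omega> then indicator A \<omega> * H l (X k \<omega>) else 0)" for l
      using that by (auto simp: E_def indicator_def)
    then show ?thesis by (simp add: L_def finite_lists_length)
  qed
  then have "(\<integral>\<omega>\<in>A. H (history X k \<omega>) (X k \<omega>) \<partial>M)
      = (\<integral>\<omega>. (\<Sum>l\<in>L. H l (X k \<omega>) * indicator (E l) \<omega>) \<partial>M)"
    unfolding set_lebesgue_integral_def by (intro Bochner_Integration.integral_cong) simp_all
  also have "\<dots> = (\<Sum>l\<in>L. (\<integral>\<omega>\<in>E l. H l (X k \<omega>) \<partial>M))"
    unfolding set_lebesgue_integral_def
    using integrable_finite_range[OF X_meas, of UNIV] E_events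
    by (subst Bochner_Integration.integral_sum)
      (auto intro: integrable_real_mult_indicator simp: mult.commute[of "indicator _ _"])
  also have "\<dots> = 0"
    by (simp add: set_integral_indep_sample[OF X_meas X_indep E_filt] centered)
  finally show ?thesis .
qed

lemma real_cond_exp_history_centered:
  fixes X :: "nat \<Rightarrow> 'a \<Rightarrow> 'x::finite" and H :: "'x list \<Rightarrow> 'x \<Rightarrow> real"
  assumes X_meas: "\<And>t. X t \<in> measurable M (count_space UNIV)"
    and X_indep: "indep_vars (\<lambda>_. count_space UNIV) X UNIV"
    and centered: "\<And>l. (\<Sum>x\<in>UNIV. prob {\<omega> \<in> space M. X k \<omega> = x} * H l x) = 0"
  shows "AE \<omega> in M. real_cond_exp M (filt M X k) (\<lambda>\<omega>. H (history X k \<omega>) (X k \<omega>)) \<omega> = 0"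
proof -
  interpret finite_measure_subalgebra M "filt M X k"
    by unfold_locales (rule subalgebra_filt[OF X_meas])
  have "history X (Suc k) \<in> measurable M (count_space UNIV)"
    by (rule measurable_from_subalg[OF subalgebra_filt[OF X_meas] history_measurable])
  then have "integrable M (\<lambda>\<omega>. H (butlast (history X (Suc k) \<omega>)) (last (history X (Suc k) \<omega>)))"
    by (rule integrable_finite_range[where S = "{l. length l = Suc k}"])
      (simp_all add: finite_lists_length)
  then have "integrable M (\<lambda>\<omega>. H (history X k \<omega>) (X k \<omega>))"
    by (simp add: history_Suc)
  then show ?thesis
    using real_cond_exp_charact[where g = "\<lambda>_. 0"]
      set_integral_history_centered[where H = H, OF X_meas X_indep centered] by simp
qed

end

lemma real_cond_exp_ghat_noise:
  fixes P :: "'s::finite \<Rightarrow> 'a::finite \<Rightarrow> 's \<Rightarrow> real"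
    and X :: "nat \<Rightarrow> 'w \<Rightarrow> 's \<times> 'a \<times> 's"
    and \<Theta> :: "('s \<times> 'a \<times> 's) list \<Rightarrow> real^'m"
  assumes M: "prob_space M"
    and P_sum: "\<And>s a. (\<Sum>s'\<in>UNIV. P s a s') = 1"
    and d_sum: "(\<Sum>s\<in>UNIV. \<Sum>a\<in>UNIV. d s a) = 1"
    and X_meas: "\<And>k. X k \<in> measurable M (count_space UNIV)"
    and X_indep: "prob_space.indep_vars M (\<lambda>_. count_space UNIV) X UNIV"
    and X_distr: "\<And>k s a s'. measure M {\<omega> \<in> space M. X k \<omega> = (s, a, s')} = d s a * P s a s'"
  shows "AE \<omega> in M. real_cond_exp M (filt M X k)
    (\<lambda>\<omega>. (ghat r \<gamma> phi (X k \<omega>) (\<Theta> (history X k \<omega>))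
           - gbar P r \<gamma> d phi (\<Theta> (history X k \<omega>))) $ i) \<omega> = 0"
proof -
  interpret prob_space M by (rule M)
  have "prob {\<omega> \<in> space M. X k \<omega> = x} = sample_prob P d x" for x
    by (cases x) (simp add: X_distr sample_prob_def)
  moreover have "(\<Sum>x\<in>UNIV. sample_prob P d x * (ghat r \<gamma> phi x \<theta> - gbar P r \<gamma> d phi \<theta>) $ i) = 0"
    for \<theta>
    using arg_cong[OF ghat_centered[OF P_sum d_sum], of "\<lambda>v. v $ i"] by (simp add: sum_component)
  ultimately show ?thesis
    by (intro real_cond_exp_history_centered[OF X_meas X_indep]) simp
qed

lemma theta_iter_history:
  "theta_iter r \<gamma> \<alpha> phi \<theta>0 X k \<omega>
     = foldl (\<lambda>\<theta> x. \<theta> + \<alpha> *\<^sub>R ghat r \<gamma> phi x \<theta>) \<theta>0 (history X k \<omega>)"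
  by (induction k) (simp_all add: history_Suc)

theorem proposition2:
  fixes P :: "'s::finite \<Rightarrow> 'a::finite \<Rightarrow> 's \<Rightarrow> real"
    and r :: "'s \<Rightarrow> 'a \<Rightarrow> 's \<Rightarrow> real"
    and d :: "'s \<Rightarrow> 'a \<Rightarrow> real"
    and phi :: "'s \<Rightarrow> 'a \<Rightarrow> real^'m"
    and \<gamma> \<alpha> :: real
    and \<theta>0 \<theta>s :: "real^'m"
    and M :: "'w measure"
    and X :: "nat \<Rightarrow> 'w \<Rightarrow> 's \<times> 'a \<times> 's"
  assumes P_nonneg: "\<And>s a s'. 0 \<le> P s a s'"
    and P_sum: "\<And>s a. (\<Sum>s'\<in>UNIV. P s a s') = 1"
    and gamma: "0 < \<gamma>" "\<gamma> < 1"
    and alpha: "0 < \<alpha>" "\<alpha> < 1"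
    and d_pos: "\<And>s a. 0 < d s a"
    and d_sum: "(\<Sum>s\<in>UNIV. \<Sum>a\<in>UNIV. d s a) = 1"
    and full_rank: "\<And>\<theta>. (\<forall>s a. phi s a \<bullet> \<theta> = 0) \<Longrightarrow> \<theta> = 0"
    and jsr: "jsr_dir P \<gamma> \<alpha> d phi < 1"
    and fixpt: "gbar P r \<gamma> d phi \<theta>s = 0"
    and M: "prob_space M"
    and X_meas: "\<And>k. X k \<in> measurable M (count_space UNIV)"
    and X_indep: "prob_space.indep_vars M (\<lambda>_. count_space UNIV) X UNIV"
    and X_distr: "\<And>k s a s'. measure M {\<omega> \<in> space M. X k \<omega> = (s, a, s')} = d s a * P s a s'"
  shows "\<exists>mu :: nat \<Rightarrow> 'w \<Rightarrow> 's \<Rightarrow> 'a \<Rightarrow> real.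
           (\<forall>k. \<forall>\<omega>\<in>space M. stoch_policy (mu k \<omega>))
         \<and> (\<forall>k s a. (\<lambda>\<omega>. mu k \<omega> s a) \<in> borel_measurable (filt M X k))
         \<and> (\<forall>k. \<forall>\<omega>\<in>space M.
              theta_iter r \<gamma> \<alpha> phi \<theta>0 X (Suc k) \<omega> - \<theta>s
                = Amat P \<gamma> \<alpha> d phi (mu k \<omega>) (theta_iter r \<gamma> \<alpha> phi \<theta>0 X k \<omega> - \<theta>s)
                  + \<alpha> *\<^sub>R (ghat r \<gamma> phi (X k \<omega>) (theta_iter r \<gamma> \<alpha> phi \<theta>0 X k \<omega>)
                          - gbar P r \<gamma> d phi (theta_iter r \<gamma> \<alpha> phi \<theta>0 X k \<omega>)))
         \<and> (\<forall>k i. AE \<omega> in M. real_cond_exp M (filt M X k)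
              (\<lambda>\<omega>. (ghat r \<gamma> phi (X k \<omega>) (theta_iter r \<gamma> \<alpha> phi \<theta>0 X k \<omega>)
                     - gbar P r \<gamma> d phi (theta_iter r \<gamma> \<alpha> phi \<theta>0 X k \<omega>)) $ i) \<omega> = 0)"
proof -
  define \<theta> where "\<theta> k \<omega> = theta_iter r \<gamma> \<alpha> phi \<theta>0 X k \<omega>" for k \<omega>
  define mu where "mu k \<omega> = linearizing_policy phi \<theta>s (\<theta> k \<omega>)" for k \<omega>
  have adapted: "(\<lambda>\<omega>. mu k \<omega> s a) \<in> borel_measurable (filt M X k)" for k s a
    unfolding mu_def \<theta>_def theta_iter_history
    by (rule measurable_compose[OF history_measurable]) simp
  have noise: "AE \<omega> in M. real_cond_exp M (filt M X k)
      (\<lambda>\<omega>. (ghat r \<gamma> phi (X k \<omega>) (\<theta> k \<omega>) - gbar P r \<gamma> d phi (\<theta> k \<omega>)) $ i) \<omega> = 0" for k i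
    unfolding \<theta>_def theta_iter_history
    by (rule real_cond_exp_ghat_noise[OF M P_sum d_sum X_meas X_indep X_distr])
  show ?thesis
    unfolding \<theta>_def[symmetric]
    by (intro exI[of _ mu] conjI allI ballI adapted noise)
      (simp_all add: mu_def \<theta>_def linearizing_policy(1) ghat_step_error_eq[OF fixpt])
qed

end
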